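(* Let $E$ be a metrizable locally solid vector lattice which is an ideal in its topological completion $\widehat E$. Then $E$ has the countable sup property if and only if $\widehat E$ has the countable sup property.
   Context: A locally solid vector lattice is an (Archimedean) vector lattice with a linear topology having a base of zero neighborhoods consisting of solid sets; its topological completion $\widehat E$ is the completion of the topological vector space $E$, which is again a locally solid vector lattice containing $E$ as a dense vector sublattice. A vector lattice has the countable sup property if every nonempty subset possessing a supremum contains a countable subset with the same supremum. *)

theory Defs
  imports "HOL-Analysis.Analysis"
begin

text \<open>Vector lattices are modelled by the type class combination
  ordered_real_vector + lattice (an ordered real vector space whose order is a lattice).\<close>

definition labs :: "'a::{ordered_real_vector,lattice} \<Rightarrow> 'a" where
  "labs x = sup x (- x)"

definition archimedean_vl :: "'a::{ordered_real_vector,lattice} itself \<Rightarrow> bool" where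
  "archimedean_vl _ \<longleftrightarrow>
     (\<forall>x y::'a. 0 \<le> x \<and> (\<forall>n::nat. real n *\<^sub>R x \<le> y) \<longrightarrow> x = 0)"

definition solid_set :: "'a::{ordered_real_vector,lattice} set \<Rightarrow> bool" where
  "solid_set V \<longleftrightarrow> (\<forall>x\<in>V. \<forall>y. labs y \<le> labs x \<longrightarrow> y \<in> V)"

definition linear_topology :: "'a::real_vector topology \<Rightarrow> bool" where
  "linear_topology \<tau> \<longleftrightarrow> topspace \<tau> = UNIV
     \<and> continuous_map (prod_topology \<tau> \<tau>) \<tau> (\<lambda>(x, y). x + y)
     \<and> continuous_map (prod_topology euclideanreal \<tau>) \<tau> (\<lambda>(a, x). a *\<^sub>R x)"

definition zero_nhd :: "'a::real_vector topology \<Rightarrow> 'a set \<Rightarrow> bool" where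
  "zero_nhd \<tau> V \<longleftrightarrow> (\<exists>W. openin \<tau> W \<and> 0 \<in> W \<and> W \<subseteq> V)"

definition locally_solid :: "'a::{ordered_real_vector,lattice} topology \<Rightarrow> bool" where
  "locally_solid \<tau> \<longleftrightarrow> linear_topology \<tau> \<and>
     (\<forall>U. zero_nhd \<tau> U \<longrightarrow> (\<exists>V. zero_nhd \<tau> V \<and> solid_set V \<and> V \<subseteq> U))"

definition locally_solid_vector_lattice :: "'a::{ordered_real_vector,lattice} topology \<Rightarrow> bool" where
  "locally_solid_vector_lattice \<tau> \<longleftrightarrow> archimedean_vl TYPE('a) \<and> locally_solid \<tau>"

definition tvs_cauchy :: "'a::real_vector topology \<Rightarrow> 'a filter \<Rightarrow> bool" where
  "tvs_cauchy \<tau> F \<longleftrightarrow> F \<noteq> bot \<and>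
     (\<forall>U. zero_nhd \<tau> U \<longrightarrow> (\<exists>A. eventually (\<lambda>x. x \<in> A) F \<and> (\<forall>x\<in>A. \<forall>y\<in>A. x - y \<in> U)))"

definition tvs_complete :: "'a::real_vector topology \<Rightarrow> bool" where
  "tvs_complete \<tau> \<longleftrightarrow> (\<forall>F. tvs_cauchy \<tau> F \<longrightarrow> (\<exists>x. limitin \<tau> (\<lambda>z. z) x F))"

definition vector_sublattice :: "'a::{ordered_real_vector,lattice} set \<Rightarrow> bool" where
  "vector_sublattice E \<longleftrightarrow> subspace E \<and> (\<forall>x\<in>E. \<forall>y\<in>E. sup x y \<in> E \<and> inf x y \<in> E)"

definition order_ideal :: "'a::{ordered_real_vector,lattice} set \<Rightarrow> bool" where
  "order_ideal E \<longleftrightarrow> subspace E \<and> solid_set E"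

definition is_sup_in :: "'a::order set \<Rightarrow> 'a set \<Rightarrow> 'a \<Rightarrow> bool" where
  "is_sup_in S A s \<longleftrightarrow> s \<in> S \<and> (\<forall>a\<in>A. a \<le> s) \<and> (\<forall>u\<in>S. (\<forall>a\<in>A. a \<le> u) \<longrightarrow> s \<le> u)"

definition countable_sup_property :: "'a::order set \<Rightarrow> bool" where
  "countable_sup_property S \<longleftrightarrow>
     (\<forall>A s. A \<subseteq> S \<and> A \<noteq> {} \<and> is_sup_in S A s \<longrightarrow>
        (\<exists>B. B \<subseteq> A \<and> countable B \<and> is_sup_in S B s))"

end

theory Submission
  imports Defs "HOL-Library.Lattice_Algebras"
begin

text \<open>Since \<open>E\<close> is an ideal, a supremum in \<open>E\<close> of a nonempty subset of \<open>E\<close> is also its supremum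
  in \<open>E\<^sup>\<and>\<close>, which gives one direction at once. Conversely let \<open>s = sup A\<close> in \<open>E\<^sup>\<and>\<close>, fix \<open>a\<^sub>0 \<in> A\<close> and
  put \<open>c = s - a\<^sub>0 \<ge> 0\<close>. Metrizability of \<open>E\<close> and density give a countable set of \<open>e \<in> E\<close>
  approximating \<open>c\<close>; their truncations \<open>f\<^sub>e = (e \<squnion> 0) \<sqinter> c\<close> lie in the ideal \<open>E\<close> and are suprema
  of the sets \<open>{(a \<squnion> a\<^sub>0 - a\<^sub>0) \<sqinter> f\<^sub>e | a \<in> A} \<subseteq> E\<close>, so each is attained on a countable part of \<open>A\<close>.
  An upper bound \<open>u\<close> of the union of these parts satisfies \<open>f\<^sub>e \<le> u - a\<^sub>0\<close>, hence
  \<open>0 \<le> c - c \<sqinter> (u - a\<^sub>0) \<le> |c - e|\<close> for all approximants \<open>e\<close>; local solidity and the Hausdorff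
  property force \<open>c \<le> u - a\<^sub>0\<close>, i.e. \<open>s \<le> u\<close>.\<close>

lemma vl_lattice_ab_group_add:
  "class.lattice_ab_group_add (+) (0::'a::{ordered_real_vector,lattice}) (-) uminus (\<le>) (<) inf sup"
  by unfold_locales (auto intro: add_left_mono)

lemma vl_add_eq_sup_inf: "(a::'a::{ordered_real_vector,lattice}) + b = sup a b + inf a b"
  by (rule lattice_ab_group_add.add_eq_inf_sup[OF vl_lattice_ab_group_add])

lemma vl_minus_inf: "- inf (a::'a::{ordered_real_vector,lattice}) b = sup (- a) (- b)"
  by (rule lattice_ab_group_add.neg_inf_eq_sup[OF vl_lattice_ab_group_add])

lemma vl_semilattice_sup_ab_group_add:
  "class.semilattice_sup_ab_group_add (+) (0::'a::{ordered_real_vector,lattice}) (-) uminus (\<le>) (<) sup"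
  by unfold_locales (auto intro: add_left_mono)

lemma vl_add_sup_distrib_left: "(c::'a::{ordered_real_vector,lattice}) + sup a b = sup (c + a) (c + b)"
  by (rule semilattice_sup_ab_group_add.add_sup_distrib_left[OF vl_semilattice_sup_ab_group_add])

lemma labs_ge: "(x::'a::{ordered_real_vector,lattice}) \<le> labs x" "- x \<le> labs x"
  by (auto simp: labs_def)

lemma labs_nonneg: "0 \<le> labs (x::'a::{ordered_real_vector,lattice})"
proof -
  have "x + - x \<le> labs x + labs x" by (intro add_mono labs_ge)
  hence "0 \<le> 2 *\<^sub>R labs x" by (simp add: scaleR_2)
  hence "0 \<le> (1/2::real) *\<^sub>R (2 *\<^sub>R labs x)" by (rule scaleR_nonneg_nonneg[rotated]) simp
  thus ?thesis by simp
qed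

lemma labs_eq_self: "0 \<le> (x::'a::{ordered_real_vector,lattice}) \<Longrightarrow> labs x = x"
  unfolding labs_def by (rule sup_absorb1) (meson neg_le_0_iff_le order_trans)

lemma labs_minus_commute: "labs (a - b) = labs (b - (a::'a::{ordered_real_vector,lattice}))"
  by (simp add: labs_def sup_commute)

lemma solid_setD_nonneg: "solid_set V \<Longrightarrow> x \<in> V \<Longrightarrow> 0 \<le> y \<Longrightarrow> y \<le> labs x \<Longrightarrow> y \<in> V"
  unfolding solid_set_def by (metis labs_eq_self)

lemma truncation_deficit_le_labs:
  fixes c e :: "'a::{ordered_real_vector,lattice}"
  shows "c - inf (sup e 0) c \<le> labs (c - e)"
proof -
  have "c - inf (sup e 0) c = c + sup (- sup e 0) (- c)" using vl_minus_inf by simp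
  also have "\<dots> = sup (c - sup e 0) 0" by (simp add: vl_add_sup_distrib_left)
  also have "\<dots> \<le> labs (c - e)"
  proof (rule sup_least)
    have "c - sup e 0 \<le> c - e" by (rule diff_left_mono) simp
    thus "c - sup e 0 \<le> labs (c - e)" using labs_ge(1) order_trans by blast
  qed (rule labs_nonneg)
  finally show ?thesis .
qed

subsection \<open>Suprema in ideals\<close>

lemma is_sup_in_restrict: "is_sup_in T A s \<Longrightarrow> S \<subseteq> T \<Longrightarrow> s \<in> S \<Longrightarrow> is_sup_in S A s"
  by (auto simp: is_sup_in_def)

text \<open>Any upper bound \<open>u\<close> of \<open>A\<close> can be replaced by \<open>u \<sqinter> s\<close>, which lies in the ideal since
  \<open>0 \<le> u \<sqinter> s - a\<^sub>0 \<le> s - a\<^sub>0\<close>.\<close>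
lemma order_ideal_is_sup_in_UNIV:
  fixes E :: "'a::{ordered_real_vector,lattice} set"
  assumes "order_ideal E" "A \<subseteq> E" "A \<noteq> {}" "is_sup_in E A s"
  shows "is_sup_in UNIV A s"
proof -
  from assms(4) have sE: "s \<in> E" and ub: "\<forall>a\<in>A. a \<le> s"
    and lub: "\<forall>u\<in>E. (\<forall>a\<in>A. a \<le> u) \<longrightarrow> s \<le> u"
    by (auto simp: is_sup_in_def)
  obtain a0 where a0: "a0 \<in> A" using assms(3) by auto
  have sub: "subspace E" and sol: "solid_set E" using assms(1) by (auto simp: order_ideal_def)
  have a0E: "a0 \<in> E" using a0 assms(2) by auto
  show ?thesis unfolding is_sup_in_def
  proof (intro conjI ballI impI)
    fix u assume uu: "\<forall>a\<in>A. a \<le> u"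
    define w where "w = inf u s"
    have w_ub: "\<forall>a\<in>A. a \<le> w" unfolding w_def using uu ub by (intro ballI le_infI) auto
    hence w0: "0 \<le> w - a0" using a0 by simp
    have "w - a0 \<le> labs (s - a0)"
      using w0 by (simp add: labs_eq_self w_def diff_right_mono)
    moreover have "s - a0 \<in> E" using sub sE a0E by (simp add: subspace_diff)
    ultimately have "w - a0 \<in> E" using solid_setD_nonneg[OF sol _ w0] by blast
    hence "w \<in> E" using subspace_add[OF sub _ a0E] by fastforce
    hence "s \<le> w" using lub w_ub by blast
    thus "s \<le> u" unfolding w_def using le_infE by blast
  qed (use ub in auto)
qed

lemma countable_sup_property_order_ideal:
  fixes E :: "'a::{ordered_real_vector,lattice} set"
  assumes "order_ideal E" "countable_sup_property (UNIV :: 'a set)"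
  shows "countable_sup_property E"
  unfolding countable_sup_property_def
proof (intro allI impI)
  fix A s assume A: "A \<subseteq> E \<and> A \<noteq> {} \<and> is_sup_in E A s"
  hence "is_sup_in UNIV A s" using order_ideal_is_sup_in_UNIV[OF assms(1)] by blast
  then obtain B where "B \<subseteq> A" "countable B" "is_sup_in UNIV B s"
    using assms(2) A unfolding countable_sup_property_def by blast
  moreover have "s \<in> E" using A by (simp add: is_sup_in_def)
  ultimately show "\<exists>B\<subseteq>A. countable B \<and> is_sup_in E B s"
    using is_sup_in_restrict by blast
qed

subsection \<open>Countable approximation from a dense metrizable subspace\<close>

lemma linear_topology_topspace: "linear_topology \<tau> \<Longrightarrow> topspace \<tau> = UNIV"
  by (simp add: linear_topology_def)

lemma continuous_map_affine:
  assumes "linear_topology \<tau>"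
  shows "continuous_map \<tau> \<tau> (\<lambda>x. p + r *\<^sub>R x)"
proof -
  have top: "topspace \<tau> = UNIV" and add: "continuous_map (prod_topology \<tau> \<tau>) \<tau> (\<lambda>(x, y). x + y)"
    and scale: "continuous_map (prod_topology euclideanreal \<tau>) \<tau> (\<lambda>(a, x). a *\<^sub>R x)"
    using assms unfolding linear_topology_def by blast+
  have "continuous_map \<tau> (prod_topology euclideanreal \<tau>) (\<lambda>x. (r, x))"
    by (intro continuous_map_pairedI continuous_map_id[unfolded id_def]) simp
  from continuous_map_compose[OF this scale] have "continuous_map \<tau> \<tau> (\<lambda>x. r *\<^sub>R x)"
    by (simp add: o_def)
  hence "continuous_map \<tau> (prod_topology \<tau> \<tau>) (\<lambda>x. (p, r *\<^sub>R x))"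
    by (intro continuous_map_pairedI) (auto simp: top)
  from continuous_map_compose[OF this add] show ?thesis by (simp add: o_def)
qed

lemma openin_affine_preimage:
  assumes "linear_topology \<tau>" "openin \<tau> Q"
  shows "openin \<tau> {x. p + r *\<^sub>R x \<in> Q}"
  using openin_continuous_map_preimage[OF continuous_map_affine[OF assms(1)] assms(2)]
  by (simp add: linear_topology_topspace[OF assms(1)])

lemma linear_topology_zero_nhd_split:
  assumes "linear_topology \<tau>" "openin \<tau> W" "0 \<in> W"
  obtains U V where "openin \<tau> U" "openin \<tau> V" "0 \<in> U" "0 \<in> V" "\<And>a b. a \<in> U \<Longrightarrow> b \<in> V \<Longrightarrow> a + b \<in> W"
proof -
  have top: "topspace \<tau> = UNIV" and add: "continuous_map (prod_topology \<tau> \<tau>) \<tau> (\<lambda>(x, y). x + y)"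
    using assms(1) unfolding linear_topology_def by blast+
  let ?P = "{z. (\<lambda>(x, y). x + y) z \<in> W}"
  have "openin (prod_topology \<tau> \<tau>) ?P"
    using openin_continuous_map_preimage[OF add assms(2)] by (simp add: top)
  hence split: "\<forall>x y. (x, y) \<in> ?P \<longrightarrow> (\<exists>U V. openin \<tau> U \<and> openin \<tau> V \<and> x \<in> U \<and> y \<in> V \<and> U \<times> V \<subseteq> ?P)"
    by (simp only: openin_prod_topology_alt)
  have "(0, 0) \<in> ?P" using assms(3) by simp
  from split[rule_format, OF this] obtain U V where UV: "openin \<tau> U" "openin \<tau> V" "0 \<in> U" "0 \<in> V" "U \<times> V \<subseteq> ?P"
    by blast
  have "a + b \<in> W" if "a \<in> U" "b \<in> V" for a b
    using subsetD[OF UV(5) SigmaI[OF that]] by simp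
  with UV(1-4) show thesis using that by blast
qed

lemma dense_meets_openin:
  assumes "\<tau> closure_of E = UNIV" "openin \<tau> T" "x \<in> T"
  obtains z where "z \<in> E" "z \<in> T"
  using assms by (metis UNIV_I in_closure_of)

text \<open>An open set \<open>O\<close> with \<open>O \<inter> E \<subseteq> U\<close> satisfies \<open>O \<subseteq> U + V\<close> for every zero neighbourhood \<open>V\<close>,
  because each \<open>y \<in> O\<close> has a point of \<open>E\<close> in the open set \<open>O \<inter> (y - V)\<close>.\<close>
lemma countable_zero_nhd_base:
  fixes \<tau> :: "'a::real_vector topology"
  assumes lt: "linear_topology \<tau>" and dense: "\<tau> closure_of E = UNIV"
    and metr: "metrizable_space (subtopology \<tau> E)" and E0: "0 \<in> E"
  obtains \<O> where "countable \<O>" "\<And>Q. Q \<in> \<O> \<Longrightarrow> openin \<tau> Q \<and> 0 \<in> Q"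
    "\<And>W. openin \<tau> W \<Longrightarrow> 0 \<in> W \<Longrightarrow> \<exists>Q\<in>\<O>. Q \<subseteq> W"
proof -
  have top: "topspace \<tau> = UNIV" using lt by (rule linear_topology_topspace)
  have "first_countable (subtopology \<tau> E)" using metr by (rule metrizable_imp_first_countable)
  then obtain \<B> where Bc: "countable \<B>" and Bo: "\<forall>V\<in>\<B>. openin (subtopology \<tau> E) V"
    and Bb: "\<forall>U. openin (subtopology \<tau> E) U \<and> 0 \<in> U \<longrightarrow> (\<exists>V\<in>\<B>. 0 \<in> V \<and> V \<subseteq> U)"
    unfolding first_countable_def using E0 top by (auto simp: topspace_subtopology)
  obtain lift where lift: "\<forall>V\<in>\<B>. openin \<tau> (lift V) \<and> V = lift V \<inter> E"
    using Bo by (simp add: openin_subtopology) metis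
  show thesis
  proof
    show "countable (lift ` {V\<in>\<B>. 0 \<in> V})" using Bc by simp
    show "Q \<in> lift ` {V\<in>\<B>. 0 \<in> V} \<Longrightarrow> openin \<tau> Q \<and> 0 \<in> Q" for Q using lift by auto
  next
    fix W assume W: "openin \<tau> W" "0 \<in> W"
    obtain U V' where UV': "openin \<tau> U" "openin \<tau> V'" "0 \<in> U" "0 \<in> V'"
      and sum: "\<And>a b. a \<in> U \<Longrightarrow> b \<in> V' \<Longrightarrow> a + b \<in> W"
      using linear_topology_zero_nhd_split[OF lt W] by blast
    have "openin (subtopology \<tau> E) (U \<inter> E)" using UV' by (auto simp: openin_subtopology)
    then obtain V where V: "V \<in> \<B>" "0 \<in> V" "V \<subseteq> U \<inter> E" using Bb E0 UV' by blast
    have "lift V \<subseteq> W"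
    proof
      fix y assume y: "y \<in> lift V"
      have "openin \<tau> (lift V \<inter> {z. y + (-1) *\<^sub>R z \<in> V'})"
        using openin_affine_preimage[OF lt UV'(2)] lift V(1) by blast
      moreover have "y \<in> lift V \<inter> {z. y + (-1) *\<^sub>R z \<in> V'}" using y UV' by simp
      ultimately obtain z where "z \<in> E" "z \<in> lift V \<inter> {z. y + (-1) *\<^sub>R z \<in> V'}"
        by (rule dense_meets_openin[OF dense])
      hence "z \<in> U" "y - z \<in> V'" using lift V by auto
      from sum[OF this] show "y \<in> W" by simp
    qed
    thus "\<exists>Q\<in>lift ` {V\<in>\<B>. 0 \<in> V}. Q \<subseteq> W" using V by blast
  qed
qed

lemma countable_approximants:
  fixes \<tau> :: "'a::real_vector topology"
  assumes lt: "linear_topology \<tau>" and dense: "\<tau> closure_of E = UNIV"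
    and metr: "metrizable_space (subtopology \<tau> E)" and E0: "0 \<in> E"
  obtains S where "countable S" "S \<subseteq> E" "\<And>W. openin \<tau> W \<Longrightarrow> 0 \<in> W \<Longrightarrow> \<exists>e\<in>S. e - c \<in> W"
proof -
  obtain \<O> where Oc: "countable \<O>" and Oo: "\<And>Q. Q \<in> \<O> \<Longrightarrow> openin \<tau> Q \<and> 0 \<in> Q"
    and Ob: "\<And>W. openin \<tau> W \<Longrightarrow> 0 \<in> W \<Longrightarrow> \<exists>Q\<in>\<O>. Q \<subseteq> W"
    using countable_zero_nhd_base[OF assms] by blast
  have "\<exists>z. z \<in> E \<and> z - c \<in> Q" if Q: "Q \<in> \<O>" for Q
  proof -
    have "openin \<tau> {x. (- c) + 1 *\<^sub>R x \<in> Q}" using openin_affine_preimage[OF lt] Oo[OF Q] by blast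
    moreover have "c \<in> {x. (- c) + 1 *\<^sub>R x \<in> Q}" using Oo[OF Q] by simp
    ultimately obtain z where "z \<in> E" "z \<in> {x. (- c) + 1 *\<^sub>R x \<in> Q}"
      by (rule dense_meets_openin[OF dense])
    thus ?thesis by auto
  qed
  then obtain g where g: "\<And>Q. Q \<in> \<O> \<Longrightarrow> g Q \<in> E \<and> g Q - c \<in> Q" by metis
  show thesis
  proof
    show "countable (g ` \<O>)" using Oc by simp
    show "g ` \<O> \<subseteq> E" using g by auto
    fix W assume "openin \<tau> W" "0 \<in> W"
    then obtain Q where "Q \<in> \<O>" "Q \<subseteq> W" using Ob by blast
    thus "\<exists>e\<in>g ` \<O>. e - c \<in> W" using g by blast
  qed
qed

lemma locally_solid_Hausdorff_eq_0:
  assumes ls: "locally_solid \<tau>" and hs: "Hausdorff_space \<tau>" and x0: "0 \<le> x"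
    and small: "\<And>W. openin \<tau> W \<Longrightarrow> 0 \<in> W \<Longrightarrow> \<exists>d\<in>W. x \<le> labs d"
  shows "x = 0"
proof (rule ccontr)
  assume "x \<noteq> 0"
  have top: "topspace \<tau> = UNIV"
    using ls linear_topology_topspace unfolding locally_solid_def by blast
  obtain U1 U2 where U: "openin \<tau> U1" "openin \<tau> U2" "x \<in> U1" "0 \<in> U2" "disjnt U1 U2"
    using hs \<open>x \<noteq> 0\<close> unfolding Hausdorff_space_def top by blast
  have "zero_nhd \<tau> U2" unfolding zero_nhd_def using U by blast
  then obtain V where V: "zero_nhd \<tau> V" "solid_set V" "V \<subseteq> U2"
    using ls by (auto simp: locally_solid_def)
  then obtain W where W: "openin \<tau> W" "0 \<in> W" "W \<subseteq> V" unfolding zero_nhd_def by blast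
  then obtain d where "d \<in> W" "x \<le> labs d" using small by blast
  hence "x \<in> V" using solid_setD_nonneg[OF V(2) _ x0] W(3) by blast
  thus False using U V(3) by (auto simp: disjnt_def)
qed

lemma le_if_truncated_approximants_le:
  fixes \<tau> :: "'a::{ordered_real_vector,lattice} topology"
  assumes ls: "locally_solid \<tau>" and hs: "Hausdorff_space \<tau>"
    and approx: "\<And>W. openin \<tau> W \<Longrightarrow> 0 \<in> W \<Longrightarrow> \<exists>e\<in>S. e - c \<in> W"
    and le: "\<And>e. e \<in> S \<Longrightarrow> inf (sup e 0) c \<le> v"
  shows "c \<le> v"
proof -
  have "c - inf c v = 0"
  proof (rule locally_solid_Hausdorff_eq_0[OF ls hs])
    fix W assume "openin \<tau> W" "0 \<in> W"
    then obtain e where e: "e \<in> S" "e - c \<in> W" using approx by blast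
    have "c - inf c v \<le> c - inf (sup e 0) c" using le[OF e(1)] by (simp add: diff_left_mono)
    also have "\<dots> \<le> labs (e - c)" unfolding labs_minus_commute[of e]
      by (rule truncation_deficit_le_labs)
    finally show "\<exists>d\<in>W. c - inf c v \<le> labs d" using e by blast
  qed simp
  thus ?thesis by (metis eq_iff_diff_eq_0 inf.absorb_iff1)
qed

text \<open>With \<open>y a = a \<squnion> a\<^sub>0 - a\<^sub>0\<close> one has \<open>y a + e = y a \<squnion> e + y a \<sqinter> e \<le> (s - a\<^sub>0) + u\<close>, so \<open>s + e - u\<close>
  is an upper bound of \<open>A\<close>.\<close>
lemma is_sup_in_truncated_differences:
  fixes A :: "'a::{ordered_real_vector,lattice} set"
  assumes sup: "is_sup_in UNIV A s" and a0: "a0 \<in> A" and e: "e \<le> s - a0"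
  shows "is_sup_in UNIV ((\<lambda>a. inf (sup a a0 - a0) e) ` A) e"
  unfolding is_sup_in_def
proof (intro conjI ballI impI)
  have ub: "\<forall>a\<in>A. a \<le> s" and lub: "\<forall>u. (\<forall>a\<in>A. a \<le> u) \<longrightarrow> s \<le> u"
    using sup by (auto simp: is_sup_in_def)
  fix u assume uu: "\<forall>b\<in>(\<lambda>a. inf (sup a a0 - a0) e) ` A. b \<le> u"
  have "a \<le> s + u - e" if a: "a \<in> A" for a
  proof -
    define y where "y = sup a a0 - a0"
    have "sup a a0 \<le> s" using ub a a0 by (intro sup_least) auto
    hence "y \<le> s - a0" unfolding y_def by (rule diff_right_mono)
    hence "sup y e \<le> s - a0" using e by (rule sup_least)
    moreover have "inf y e \<le> u" using uu a unfolding y_def by blast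
    ultimately have "y + e \<le> (s - a0) + u" unfolding vl_add_eq_sup_inf[of y e] by (rule add_mono)
    hence "sup a a0 \<le> s + u - e" unfolding y_def by (simp add: algebra_simps)
    thus "a \<le> s + u - e" using sup_ge1 order_trans by blast
  qed
  hence "s \<le> s + u - e" using lub by blast
  thus "e \<le> u" by (simp add: algebra_simps)
qed auto

lemma countable_part_of_truncated_sup:
  fixes E :: "'a::{ordered_real_vector,lattice} set"
  assumes ideal: "order_ideal E" and csp: "countable_sup_property E"
    and sup: "is_sup_in UNIV A s" and a0: "a0 \<in> A"
    and eE: "e \<in> E" and e0: "0 \<le> e" and e: "e \<le> s - a0"
  obtains A' where "countable A'" "A' \<subseteq> A" "is_sup_in UNIV ((\<lambda>a. inf (sup a a0 - a0) e) ` A') e"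
proof -
  let ?t = "\<lambda>a. inf (sup a a0 - a0) e"
  have tE: "?t ` A \<subseteq> E"
  proof
    fix b assume "b \<in> ?t ` A"
    then obtain a where b: "b = ?t a" by blast
    have "0 \<le> b" using e0 unfolding b by simp
    moreover have "b \<le> labs e" using labs_eq_self[OF e0] unfolding b by simp
    ultimately show "b \<in> E" using solid_setD_nonneg eE ideal by (auto simp: order_ideal_def)
  qed
  have "is_sup_in E (?t ` A) e"
    using is_sup_in_truncated_differences[OF sup a0 e] eE by (auto intro: is_sup_in_restrict)
  then obtain B where B: "B \<subseteq> ?t ` A" "countable B" "is_sup_in E B e"
    using csp tE a0 unfolding countable_sup_property_def by blast
  define B' where "B' = insert (?t a0) B" \<comment> \<open>nonempty, as required to leave \<open>E\<close>\<close>
  have B'A: "B' \<subseteq> ?t ` A" using B a0 unfolding B'_def by blast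
  have "is_sup_in E B' e" using B(3) unfolding B'_def is_sup_in_def by auto
  hence "is_sup_in UNIV B' e"
    using order_ideal_is_sup_in_UNIV[OF ideal] B'A tE unfolding B'_def by blast
  moreover obtain A' where "countable A'" "A' \<subseteq> A" "B' = ?t ` A'"
    using countable_subset_image[THEN iffD1] B'A B(2) unfolding B'_def by (metis countable_insert)
  ultimately show thesis using that by blast
qed

lemma countable_sup_property_dense_metrizable_ideal:
  fixes \<tau> :: "'a::{ordered_real_vector,lattice} topology"
  assumes ls: "locally_solid \<tau>" and hs: "Hausdorff_space \<tau>"
    and dense: "\<tau> closure_of E = UNIV" and metr: "metrizable_space (subtopology \<tau> E)"
    and ideal: "order_ideal E" and csp: "countable_sup_property E"
  shows "countable_sup_property (UNIV :: 'a set)"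
  unfolding countable_sup_property_def
proof (intro allI impI)
  fix A s assume "A \<subseteq> (UNIV::'a set) \<and> A \<noteq> {} \<and> is_sup_in UNIV A s"
  hence sup: "is_sup_in UNIV A s" and "A \<noteq> {}" by auto
  then obtain a0 where a0: "a0 \<in> A" by auto
  have ub: "\<forall>a\<in>A. a \<le> s" using sup by (simp add: is_sup_in_def)
  have lt: "linear_topology \<tau>" using ls unfolding locally_solid_def by blast
  have sol: "solid_set E" and E0: "0 \<in> E"
    using ideal by (auto simp: order_ideal_def subspace_0)
  define c where "c = s - a0"
  have c0: "0 \<le> c" unfolding c_def using ub a0 by simp
  define f where "f e = inf (sup e 0) c" for e
  have f_bounds: "0 \<le> f e" "f e \<le> s - a0" for e unfolding f_def c_def using c0 c_def by simp_all
  have fE: "f e \<in> E" if "e \<in> E" for e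
  proof -
    have "f e \<le> labs e" unfolding f_def using labs_ge(1) labs_nonneg by (meson inf.coboundedI1 sup_least)
    thus ?thesis using solid_setD_nonneg[OF sol that f_bounds(1)] by blast
  qed
  obtain S where S: "countable S" "S \<subseteq> E" "\<And>W. openin \<tau> W \<Longrightarrow> 0 \<in> W \<Longrightarrow> \<exists>e\<in>S. e - c \<in> W"
    using countable_approximants[OF lt dense metr E0, where c = c] by blast
  have "\<exists>A'. countable A' \<and> A' \<subseteq> A \<and> is_sup_in UNIV ((\<lambda>a. inf (sup a a0 - a0) (f e)) ` A') (f e)"
    if "e \<in> S" for e
    by (rule countable_part_of_truncated_sup[OF ideal csp sup a0 fE[OF subsetD[OF S(2) that]] f_bounds])
      blast
  then obtain G where G: "\<And>e. e \<in> S \<Longrightarrow> countable (G e) \<and> G e \<subseteq> A \<and>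
      is_sup_in UNIV ((\<lambda>a. inf (sup a a0 - a0) (f e)) ` G e) (f e)" by metis
  define A' where "A' = insert a0 (\<Union> (G ` S))"
  have "is_sup_in UNIV A' s" unfolding is_sup_in_def
  proof (intro conjI ballI impI)
    show "a \<le> s" if "a \<in> A'" for a using that G a0 ub unfolding A'_def by blast
  next
    fix u assume uu: "\<forall>a\<in>A'. a \<le> u"
    have f_le: "f e \<le> u - a0" if e: "e \<in> S" for e
    proof -
      have "\<forall>a\<in>G e. inf (sup a a0 - a0) (f e) \<le> u - a0"
        using uu e unfolding A'_def by (auto intro: le_infI1 diff_right_mono)
      thus ?thesis using G[OF e] unfolding is_sup_in_def by blast
    qed
    have "c \<le> u - a0"
      using le_if_truncated_approximants_le[OF ls hs S(3)] f_le unfolding f_def by blast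
    thus "s \<le> u" unfolding c_def by simp
  qed simp
  moreover have "countable A'" "A' \<subseteq> A" using G S(1) a0 unfolding A'_def by auto
  ultimately show "\<exists>B\<subseteq>A. countable B \<and> is_sup_in UNIV B s" by blast
qed

theorem theorem5p9:
  fixes \<tau> :: "'b::{ordered_real_vector,lattice} topology"
    and E :: "'b set"
  assumes completion_lsvl: "locally_solid_vector_lattice \<tau>"
    and completion_hausdorff: "Hausdorff_space \<tau>"
    and completion_complete: "tvs_complete \<tau>"
    and E_sublattice: "vector_sublattice E"
    and E_dense: "\<tau> closure_of E = UNIV"
    and E_metrizable: "metrizable_space (subtopology \<tau> E)"
    and E_ideal: "order_ideal E"
  shows "countable_sup_property E \<longleftrightarrow> countable_sup_property (UNIV :: 'b set)"
proof
  assume "countable_sup_property E"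
  moreover have "locally_solid \<tau>"
    using completion_lsvl by (simp add: locally_solid_vector_lattice_def)
  ultimately show "countable_sup_property (UNIV :: 'b set)"
    using countable_sup_property_dense_metrizable_ideal completion_hausdorff E_dense
      E_metrizable E_ideal by blast
next
  assume "countable_sup_property (UNIV :: 'b set)"
  thus "countable_sup_property E" using countable_sup_property_order_ideal[OF E_ideal] by blast
qed

end
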